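(* There exists a recursive subset $J\subseteq\bigoplus_{\mathbb Z}\mathbb Z$ with $\mathbf 0\notin J$ and $J=-J$ such that the following problem is undecidable: given a finite subset $X\subseteq\bigoplus_{\mathbb Z}\mathbb Z$, decide whether there exists $g\in\bigoplus_{\mathbb Z}\mathbb Z$ such that $|(X-g)\cap J|$ is odd.
   Context: $\bigoplus_{\mathbb Z}\mathbb Z$ denotes the group of finitely supported integer sequences $(x_i)_{i\in\mathbb Z}$ under addition; $X-g=\{x-g: x\in X\}$. *)

theory Defs
  imports Main "HOL-Library.Poly_Mapping" "HOL-Library.Nat_Bijection"
begin

datatype recf =
    Zf
  | Sf
  | Idf nat
  | Cnf recf "recf list"
  | Prf recf recf
  | Mnf recf

inductive eval_recf :: "recf \<Rightarrow> nat list \<Rightarrow> nat \<Rightarrow> bool" where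
  zero: "eval_recf Zf xs 0"
| succ: "eval_recf Sf (x # xs) (Suc x)"
| proj: "i < length xs \<Longrightarrow> eval_recf (Idf i) xs (xs ! i)"
| comp: "list_all2 (\<lambda>g y. eval_recf g xs y) gs ys \<Longrightarrow> eval_recf f ys y
         \<Longrightarrow> eval_recf (Cnf f gs) xs y"
| pr0: "eval_recf f xs y \<Longrightarrow> eval_recf (Prf f g) (0 # xs) y"
| prS: "eval_recf (Prf f g) (n # xs) r \<Longrightarrow> eval_recf g (n # r # xs) y
         \<Longrightarrow> eval_recf (Prf f g) (Suc n # xs) y"
| mn: "eval_recf f (n # xs) 0 \<Longrightarrow> (\<forall>m<n. \<exists>k. eval_recf f (m # xs) (Suc k))
         \<Longrightarrow> eval_recf (Mnf f) xs n"

definition recursive_set :: "nat set \<Rightarrow> bool" where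
  "recursive_set A \<longleftrightarrow>
     (\<exists>f. \<forall>n. eval_recf f [n] (if n \<in> A then 1 else 0))"

text \<open>Elements of the direct sum of countably many copies of Z indexed by Z are
  modelled by the type (int, int) poly_mapping. This decoding is
  surjective and effective.\<close>

definition decode_elem :: "nat \<Rightarrow> (int \<Rightarrow>\<^sub>0 int)" where
  "decode_elem n = sum_list (map (\<lambda>a. case prod_decode a of (i, v) \<Rightarrow>
       Poly_Mapping.single (int_decode i) (int_decode v)) (list_decode n))"

definition decode_fset :: "nat \<Rightarrow> (int \<Rightarrow>\<^sub>0 int) set" where
  "decode_fset n = decode_elem ` set (list_decode n)"

end

theory Submission
  imports Defs
begin

text \<open>Let K be the set of codes e of mu-recursive programs that output 0 on input e.
  By diagonalisation K is not recursive, but it is the projection of a decidable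
  relation "t certifies e", where t codes a trace of the computation. Write u i for the
  unit vectors. Let A be the set of w with w 2 = 1 such that w (e + 5) = 0 whenever
  w 1 codes a pair (e, t) in which t certifies e, and let J = A \<union> -A; deciding w \<in> J
  only requires checking the certificate stored in w itself. Let X = {0, u (e + 5)}.
  If e \<notin> K, translation by u (e + 5) preserves J, so every (X - g) \<inter> J has 0 or 2
  elements. If t certifies e, then w = u 2 + npair e t \<cdot> u 1 is the only element of
  (X + w) \<inter> J. Hence e \<mapsto> X reduces K to the odd-intersection problem.\<close>

section \<open>Computable functions of finitely many arguments\<close>

text \<open>A function of n arguments is represented as a functional of a valuation
  v :: nat \<Rightarrow> nat of which only v 0, ..., v (n - 1) are consulted. Closure
  properties then take the shape of introduction rules on lambda terms.\<close>

definition valuation :: "nat \<Rightarrow> nat list \<Rightarrow> nat \<Rightarrow> nat" where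
  "valuation n xs = (\<lambda>i. if i < n then xs ! i else 0)"

definition computable :: "nat \<Rightarrow> ((nat \<Rightarrow> nat) \<Rightarrow> nat) \<Rightarrow> bool" where
  "computable n F \<longleftrightarrow>
     (\<exists>r. \<forall>xs. length xs = n \<longrightarrow> eval_recf r xs (F (valuation n xs)))"

definition decidable :: "nat \<Rightarrow> ((nat \<Rightarrow> nat) \<Rightarrow> bool) \<Rightarrow> bool" where
  "decidable n P \<longleftrightarrow> computable n (\<lambda>v. if P v then 1 else 0)"

named_theorems computable_intros

lemma computable_cong: "computable n F \<Longrightarrow> (\<And>v. F v = G v) \<Longrightarrow> computable n G"
  by (metis ext)

lemma computable_cong_valuation:
  "computable n F \<Longrightarrow> (\<And>xs. length xs = n \<Longrightarrow> F (valuation n xs) = G (valuation n xs))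
    \<Longrightarrow> computable n G"
  unfolding computable_def by metis

lemma computable_zero: "computable n (\<lambda>v. 0)"
  unfolding computable_def by (rule exI[of _ Zf]) (auto intro: eval_recf.zero)

lemma computable_arg [computable_intros]: "i < n \<Longrightarrow> computable n (\<lambda>v. v i)"
  unfolding computable_def valuation_def
  by (rule exI[of _ "Idf i"]) (auto intro: eval_recf.proj)

lemma computable_Suc [computable_intros]: "computable n A \<Longrightarrow> computable n (\<lambda>v. Suc (A v))"
  unfolding computable_def
proof (elim exE)
  fix r assume r: "\<forall>xs. length xs = n \<longrightarrow> eval_recf r xs (A (valuation n xs))"
  show "\<exists>r. \<forall>xs. length xs = n \<longrightarrow> eval_recf r xs (Suc (A (valuation n xs)))"
    using r by (intro exI[of _ "Cnf Sf [r]"])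
      (auto intro!: eval_recf.comp[where ys="[A (valuation n _)]"] eval_recf.succ)
qed

lemma computable_const [computable_intros]: "computable n (\<lambda>v. c)"
  by (induction c) (auto intro: computable_zero computable_Suc)

lemma computable_compose:
  assumes F: "computable m F" and len: "length Gs = m" and G: "\<forall>G\<in>set Gs. computable n G"
  shows "computable n (\<lambda>v. F (valuation m (map (\<lambda>G. G v) Gs)))"
proof -
  obtain rf where rf: "\<forall>xs. length xs = m \<longrightarrow> eval_recf rf xs (F (valuation m xs))"
    using F computable_def by auto
  have "\<exists>rs. list_all2 (\<lambda>r G. \<forall>xs. length xs = n \<longrightarrow> eval_recf r xs (G (valuation n xs))) rs Gs"
    using G unfolding computable_def by (induction Gs) (auto simp: list_all2_Cons2)
  then obtain rs
    where rs: "list_all2 (\<lambda>r G. \<forall>xs. length xs = n \<longrightarrow> eval_recf r xs (G (valuation n xs))) rs Gs"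
    by blast
  show ?thesis unfolding computable_def
  proof (intro exI allI impI)
    fix xs :: "nat list" assume xs: "length xs = n"
    let ?ys = "map (\<lambda>G. G (valuation n xs)) Gs"
    have "list_all2 (\<lambda>g y. eval_recf g xs y) rs ?ys"
      using rs xs by (auto simp: list_all2_conv_all_nth)
    moreover have "eval_recf rf ?ys (F (valuation m ?ys))"
      using rf len by auto
    ultimately show "eval_recf (Cnf rf rs) xs (F (valuation m ?ys))"
      by (rule eval_recf.comp)
  qed
qed

lemma computable_compose1:
  assumes "computable 1 (\<lambda>v. f (v 0))" "computable n A"
  shows "computable n (\<lambda>v. f (A v))"
  using computable_compose[OF assms(1), of "[A]" n] assms(2) by (simp add: valuation_def)

lemma computable_compose2:
  assumes "computable 2 (\<lambda>v. f (v 0) (v 1))" "computable n A" "computable n B"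
  shows "computable n (\<lambda>v. f (A v) (B v))"
  using computable_compose[OF assms(1), of "[A, B]" n] assms(2,3) by (simp add: valuation_def)

lemma computable_shift:
  assumes "computable n A"
  shows "computable (Suc n) (\<lambda>v. A (\<lambda>i. v (Suc i)))"
proof -
  have "computable (Suc n) (\<lambda>v. A (valuation n (map (\<lambda>G. G v) (map (\<lambda>i v. v (Suc i)) [0..<n]))))"
    by (rule computable_compose[OF assms]) (auto intro: computable_arg)
  then show ?thesis
    by (rule computable_cong_valuation) (simp add: valuation_def cong: if_cong)
qed

lemma computable_let:
  assumes A: "computable n A" and F: "computable (Suc n) (\<lambda>v. F (v 0) (\<lambda>i. v (Suc i)))"
  shows "computable n (\<lambda>v. F (A v) v)"
proof -
  have "computable n (\<lambda>v. (\<lambda>w. F (w 0) (\<lambda>i. w (Suc i)))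
           (valuation (Suc n) (map (\<lambda>G. G v) (A # map (\<lambda>i v. v i) [0..<n]))))"
    by (rule computable_compose[OF F]) (auto intro: A computable_arg)
  then show ?thesis
    by (rule computable_cong_valuation) (simp add: valuation_def nth_Cons' cong: if_cong)
qed

lemma computable_ignore_arg1:
  assumes "computable (Suc n) (\<lambda>v. F (v 0) (\<lambda>i. v (Suc i)))"
  shows "computable (Suc (Suc n)) (\<lambda>v. F (v 0) (\<lambda>i. v (Suc (Suc i))))"
proof -
  have "computable (Suc (Suc n)) (\<lambda>v. (\<lambda>w. F (w 0) (\<lambda>i. w (Suc i)))
           (valuation (Suc n) (map (\<lambda>G. G v) ((\<lambda>v. v 0) # map (\<lambda>i v. v (Suc (Suc i))) [0..<n]))))"
    by (rule computable_compose[OF assms]) (auto intro: computable_arg)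
  then show ?thesis
    by (rule computable_cong_valuation) (simp add: valuation_def nth_Cons' cong: if_cong)
qed

lemma computable_rec_nat_arg0:
  assumes B: "computable n B"
    and S: "computable (Suc (Suc n)) (\<lambda>v. S (v 0) (v 1) (\<lambda>i. v (Suc (Suc i))))"
  shows "computable (Suc n)
           (\<lambda>v. rec_nat (B (\<lambda>i. v (Suc i))) (\<lambda>k r. S k r (\<lambda>i. v (Suc i))) (v 0))"
proof -
  obtain rb where rb: "\<forall>xs. length xs = n \<longrightarrow> eval_recf rb xs (B (valuation n xs))"
    using B computable_def by auto
  obtain rs where rs: "\<forall>xs. length xs = Suc (Suc n) \<longrightarrow> eval_recf rs xs
      (S (valuation (Suc (Suc n)) xs 0) (valuation (Suc (Suc n)) xs 1)
         (\<lambda>i. valuation (Suc (Suc n)) xs (Suc (Suc i))))"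
    using S computable_def by auto
  have eval_Prf: "eval_recf (Prf rb rs) (k # xs)
               (rec_nat (B (valuation n xs)) (\<lambda>k r. S k r (valuation n xs)) k)"
    if xs: "length xs = n" for k xs
  proof (induction k)
    case 0
    then show ?case using rb xs by (auto intro: eval_recf.pr0)
  next
    case (Suc k)
    let ?r = "rec_nat (B (valuation n xs)) (\<lambda>k r. S k r (valuation n xs)) k"
    have "(\<lambda>i. valuation (Suc (Suc n)) (k # ?r # xs) (Suc (Suc i))) = valuation n xs"
      by (auto simp: valuation_def)
    then have "eval_recf rs (k # ?r # xs) (S k ?r (valuation n xs))"
      using rs[rule_format, of "k # ?r # xs"] xs by (simp add: valuation_def)
    then show ?case using Suc by (auto intro: eval_recf.prS)
  qed
  show ?thesis unfolding computable_def
  proof (intro exI allI impI)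
    fix xs :: "nat list" assume "length xs = Suc n"
    then obtain k ys where xs: "xs = k # ys" "length ys = n" by (cases xs) auto
    have "(\<lambda>i. valuation (Suc n) xs (Suc i)) = valuation n ys" "valuation (Suc n) xs 0 = k"
      using xs by (auto simp: valuation_def)
    then show "eval_recf (Prf rb rs) xs
      (rec_nat (B (\<lambda>i. valuation (Suc n) xs (Suc i))) (\<lambda>k r. S k r (\<lambda>i. valuation (Suc n) xs (Suc i)))
         (valuation (Suc n) xs 0))"
      using eval_Prf[OF xs(2), of k] xs by simp
  qed
qed

lemma computable_rec_nat:
  assumes "computable n K" "computable n B"
    "computable (Suc (Suc n)) (\<lambda>v. S (v 0) (v 1) (\<lambda>i. v (Suc (Suc i))))"
  shows "computable n (\<lambda>v. rec_nat (B v) (\<lambda>k r. S k r v) (K v))"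
  using computable_let[OF assms(1), of "\<lambda>k w. rec_nat (B w) (\<lambda>k r. S k r w) k"]
    computable_rec_nat_arg0[OF assms(2,3)]
  by simp

lemma computable_Least_zero:
  assumes F: "computable (Suc n) (\<lambda>v. F (v 0) (\<lambda>i. v (Suc i)))" and ex: "\<And>v. \<exists>m. F m v = 0"
  shows "computable n (\<lambda>v. LEAST m. F m v = 0)"
proof -
  obtain rf where rf: "\<forall>xs. length xs = Suc n \<longrightarrow>
      eval_recf rf xs (F (valuation (Suc n) xs 0) (\<lambda>i. valuation (Suc n) xs (Suc i)))"
    using F computable_def by auto
  have rf': "eval_recf rf (m # xs) (F m (valuation n xs))" if "length xs = n" for m xs
  proof -
    have "(\<lambda>i. valuation (Suc n) (m # xs) (Suc i)) = valuation n xs"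
      by (auto simp: valuation_def)
    then show ?thesis using rf[rule_format, of "m # xs"] that by (simp add: valuation_def)
  qed
  show ?thesis unfolding computable_def
  proof (intro exI allI impI)
    fix xs :: "nat list" assume xs: "length xs = n"
    let ?m = "LEAST m. F m (valuation n xs) = 0"
    have "F ?m (valuation n xs) = 0" using ex by (rule LeastI_ex)
    moreover have "\<forall>m<?m. \<exists>k. F m (valuation n xs) = Suc k"
      using not_less_Least not0_implies_Suc by blast
    ultimately show "eval_recf (Mnf rf) xs ?m"
      using rf'[OF xs] by (metis eval_recf.mn)
  qed
qed

lemma computable_add [computable_intros]:
  assumes "computable n A" "computable n B"
  shows "computable n (\<lambda>v. A v + B v)"
proof -
  have "computable 2 (\<lambda>v. rec_nat (v 1) (\<lambda>k r. Suc r) (v 0))"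
    by (rule computable_rec_nat) (intro computable_intros; simp)+
  moreover have "rec_nat b (\<lambda>k r. Suc r) a = a + b" for a b :: nat
    by (induction a) auto
  ultimately show ?thesis
    using computable_compose2[of "\<lambda>a b. a + b", OF _ assms] by simp
qed

lemma computable_mult [computable_intros]:
  assumes "computable n A" "computable n B"
  shows "computable n (\<lambda>v. A v * B v)"
proof -
  have "computable 2 (\<lambda>v. rec_nat 0 (\<lambda>k r. r + v 1) (v 0))"
    by (rule computable_rec_nat) (intro computable_intros; simp)+
  moreover have "rec_nat 0 (\<lambda>k r. r + b) a = a * b" for a b :: nat
    by (induction a) auto
  ultimately show ?thesis
    using computable_compose2[of "\<lambda>a b. a * b", OF _ assms] by simp
qed

lemma computable_diff [computable_intros]:
  assumes "computable n A" "computable n B"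
  shows "computable n (\<lambda>v. A v - B v)"
proof -
  have "computable 1 (\<lambda>v. rec_nat 0 (\<lambda>k r. k) (v 0))"
    by (rule computable_rec_nat) (intro computable_intros; simp)+
  moreover have "rec_nat 0 (\<lambda>k r. k) a = a - 1" for a :: nat
    by (induction a) auto
  ultimately have pred: "computable m (\<lambda>v. C v - 1)" if "computable m C" for m C
    using computable_compose1[of "\<lambda>a. a - 1", OF _ that] by simp
  have "computable 2 (\<lambda>v. rec_nat (v 0) (\<lambda>k r. r - 1) (v 1))"
    by (rule computable_rec_nat) (intro computable_intros pred; simp)+
  moreover have "rec_nat a (\<lambda>k r. r - 1) b = a - b" for a b :: nat
    by (induction b) auto
  ultimately show ?thesis
    using computable_compose2[of "\<lambda>a b. a - b", OF _ assms] by simp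
qed

lemma computable_if [computable_intros]:
  assumes "decidable n P" "computable n A" "computable n B"
  shows "computable n (\<lambda>v. if P v then A v else B v)"
proof -
  have "computable n (\<lambda>v. (if P v then 1 else 0) * A v + (1 - (if P v then 1 else 0)) * B v)"
    by (intro computable_intros assms(2,3) assms(1)[unfolded decidable_def])
  then show ?thesis by (rule computable_cong) simp
qed

lemma decidable_const [computable_intros]: "decidable n (\<lambda>v. b)"
  unfolding decidable_def by (rule computable_const)

lemma decidable_le [computable_intros]:
  assumes "computable n A" "computable n B"
  shows "decidable n (\<lambda>v. A v \<le> B v)"
proof -
  have "computable n (\<lambda>v. 1 - (A v - B v))" by (intro computable_intros assms)
  then show ?thesis unfolding decidable_def by (rule computable_cong) simp
qed

lemma decidable_less [computable_intros]:
  assumes "computable n A" "computable n B"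
  shows "decidable n (\<lambda>v. A v < B v)"
proof -
  have "computable n (\<lambda>v. 1 - (Suc (A v) - B v))" by (intro computable_intros assms)
  then show ?thesis unfolding decidable_def by (rule computable_cong) simp
qed

lemma decidable_not [computable_intros]:
  assumes "decidable n P"
  shows "decidable n (\<lambda>v. \<not> P v)"
proof -
  have "computable n (\<lambda>v. 1 - (if P v then 1 else 0))"
    by (intro computable_intros assms[unfolded decidable_def])
  then show ?thesis unfolding decidable_def by (rule computable_cong) simp
qed

lemma decidable_and [computable_intros]:
  assumes "decidable n P" "decidable n Q"
  shows "decidable n (\<lambda>v. P v \<and> Q v)"
proof -
  have "computable n (\<lambda>v. (if P v then 1 else 0) * (if Q v then 1 else 0))"
    by (intro computable_intros assms[unfolded decidable_def])
  then show ?thesis unfolding decidable_def by (rule computable_cong) simp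
qed

lemma decidable_or [computable_intros]:
  "decidable n P \<Longrightarrow> decidable n Q \<Longrightarrow> decidable n (\<lambda>v. P v \<or> Q v)"
  using decidable_not[OF decidable_and[OF decidable_not decidable_not], of n P Q] by simp

lemma decidable_imp [computable_intros]:
  "decidable n P \<Longrightarrow> decidable n Q \<Longrightarrow> decidable n (\<lambda>v. P v \<longrightarrow> Q v)"
  using decidable_or[OF decidable_not, of n P Q] by simp

lemma decidable_eq [computable_intros]:
  "computable n A \<Longrightarrow> computable n B \<Longrightarrow> decidable n (\<lambda>v. A v = B v)"
  using decidable_and[OF decidable_le decidable_le, of n A B] by (simp add: order_eq_iff)

lemma decidable_if [computable_intros]:
  assumes "decidable n P" "decidable n Q" "decidable n R"
  shows "decidable n (\<lambda>v. if P v then Q v else R v)"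
proof -
  have "decidable n (\<lambda>v. (P v \<longrightarrow> Q v) \<and> (\<not> P v \<longrightarrow> R v))"
    by (intro computable_intros assms)
  then show ?thesis by (simp add: if_bool_eq_conj)
qed

lemma decidable_all_less [computable_intros]:
  assumes "computable n K" "decidable (Suc n) (\<lambda>v. P (v 0) (\<lambda>i. v (Suc i)))"
  shows "decidable n (\<lambda>v. \<forall>j<K v. P j v)"
proof -
  have "decidable (Suc (Suc n)) (\<lambda>v. P (v 0) (\<lambda>i. v (Suc (Suc i))))"
    using computable_ignore_arg1[of n "\<lambda>a w. if P a w then 1 else 0"] assms(2)
    unfolding decidable_def by simp
  then have "computable n (\<lambda>v. rec_nat 1 (\<lambda>k r. r * (if P k v then 1 else 0)) (K v))"
    by (intro computable_rec_nat assms(1) computable_intros; simp)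
  moreover have "rec_nat 1 (\<lambda>k r. r * (if P k v then 1 else 0)) b =
      (if \<forall>j<b. P j v then 1 else 0 :: nat)" for b v
    by (induction b) (auto simp: less_Suc_eq)
  ultimately show ?thesis unfolding decidable_def by simp
qed

lemma decidable_ex_less [computable_intros]:
  assumes "computable n K" "decidable (Suc n) (\<lambda>v. P (v 0) (\<lambda>i. v (Suc i)))"
  shows "decidable n (\<lambda>v. \<exists>j<K v. P j v)"
  using decidable_not[OF decidable_all_less[OF assms(1) decidable_not[OF assms(2)]]] by simp

lemma computable_sum_less [computable_intros]:
  assumes "computable n K" "computable (Suc n) (\<lambda>v. F (v 0) (\<lambda>i. v (Suc i)))"
  shows "computable n (\<lambda>v. \<Sum>j<K v. F j v)"
proof -
  have "computable (Suc (Suc n)) (\<lambda>v. F (v 0) (\<lambda>i. v (Suc (Suc i))))"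
    using computable_ignore_arg1[of n F] assms(2) by simp
  then have "computable n (\<lambda>v. rec_nat 0 (\<lambda>k r. r + F k v) (K v))"
    by (intro computable_rec_nat assms(1) computable_intros; assumption?; simp)
  moreover have "rec_nat 0 (\<lambda>k r. r + F k v) b = (\<Sum>j<b. F j v)" for b v
    by (induction b) auto
  ultimately show ?thesis by simp
qed

lemma computable_Least:
  assumes "decidable (Suc n) (\<lambda>v. P (v 0) (\<lambda>i. v (Suc i)))" "\<And>v. \<exists>m. P m v"
  shows "computable n (\<lambda>v. LEAST m. P m v)"
proof -
  have "computable n (\<lambda>v. LEAST m. (if P m v then 0 else 1 :: nat) = 0)"
    by (rule computable_Least_zero[where F="\<lambda>m v. if P m v then 0 else 1"])
      (intro computable_intros assms(1), use assms(2) in auto)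
  moreover have "((if b then 0 else 1 :: nat) = 0) = b" for b
    by simp
  ultimately show ?thesis by (simp only:)
qed

lemma computable_div2 [computable_intros]:
  assumes "computable n A"
  shows "computable n (\<lambda>v. A v div 2)"
proof -
  have "computable 1 (\<lambda>v. LEAST q. v 0 < 2 * q + 2)"
  proof (rule computable_Least)
    show "decidable (Suc 1) (\<lambda>v. v (Suc 0) < 2 * v 0 + 2)"
      by (intro computable_intros; simp)
    show "\<exists>q. v 0 < 2 * q + 2" for v :: "nat \<Rightarrow> nat"
      by (rule exI[of _ "v 0"]) simp
  qed
  moreover have "(LEAST q. a < 2 * q + 2) = a div 2" for a :: nat
    by (rule Least_equality) auto
  ultimately show ?thesis
    using computable_compose1[of "\<lambda>a. a div 2", OF _ assms] by simp
qed

lemma decidable_even [computable_intros]: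
  assumes "computable n A"
  shows "decidable n (\<lambda>v. even (A v))"
proof -
  have "decidable n (\<lambda>v. A v = 2 * (A v div 2))"
    by (intro computable_intros assms)
  moreover have "(a = 2 * (a div 2)) = even a" for a :: nat
    by presburger
  ultimately show ?thesis by simp
qed

lemma recursive_set_if_decidable:
  assumes "decidable 1 (\<lambda>v. P (v 0))"
  shows "recursive_set {n. P n}"
proof -
  obtain r
    where r: "\<forall>xs. length xs = 1 \<longrightarrow> eval_recf r xs (if P (valuation 1 xs 0) then 1 else 0)"
    using assms unfolding decidable_def computable_def by auto
  have "eval_recf r [n] (if P n then 1 else 0)" for n
    using r[rule_format, of "[n]"] by (simp add: valuation_def)
  then show ?thesis
    unfolding recursive_set_def by (intro exI[of _ r]) simp
qed

lemma recursive_set_preimage: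
  assumes S: "recursive_set S" and R: "computable 1 (\<lambda>v. R (v 0))"
  shows "recursive_set {n. R n \<in> S}"
proof -
  obtain rs where rs: "\<forall>n. eval_recf rs [n] (if n \<in> S then 1 else 0)"
    using S recursive_set_def by auto
  obtain rr where rr: "\<forall>xs. length xs = 1 \<longrightarrow> eval_recf rr xs (R (valuation 1 xs 0))"
    using R computable_def by auto
  have "eval_recf (Cnf rs [rr]) [n] (if R n \<in> S then 1 else 0)" for n
    using rr[rule_format, of "[n]"] rs
    by (intro eval_recf.comp[of _ _ "[R n]"]) (auto simp: valuation_def)
  then show ?thesis
    unfolding recursive_set_def by (intro exI[of _ "Cnf rs [rr]"]) simp
qed

section \<open>Coding of pairs and lists\<close>

definition npair :: "nat \<Rightarrow> nat \<Rightarrow> nat" where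
  "npair a b = prod_encode (a, b)"

definition nfst :: "nat \<Rightarrow> nat" where
  "nfst n = fst (prod_decode n)"

definition nsnd :: "nat \<Rightarrow> nat" where
  "nsnd n = snd (prod_decode n)"

lemma nfst_npair [simp]: "nfst (npair a b) = a"
  by (simp add: nfst_def npair_def)

lemma nsnd_npair [simp]: "nsnd (npair a b) = b"
  by (simp add: nsnd_def npair_def)

lemma npair_eq_iff [simp]: "npair a b = npair c d \<longleftrightarrow> a = c \<and> b = d"
  by (simp add: npair_def)

lemma npair_nfst_nsnd [simp]: "npair (nfst n) (nsnd n) = n"
  by (simp add: npair_def nfst_def nsnd_def)

lemma nsnd_zero: "nsnd 0 = 0"
  using nsnd_npair[of 0 0] by (simp add: npair_def prod_encode_def)

lemma computable_npair [computable_intros]: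
  assumes "computable n A" "computable n B"
  shows "computable n (\<lambda>v. npair (A v) (B v))"
proof -
  have "computable 1 (\<lambda>v. rec_nat 0 (\<lambda>k r. r + Suc k) (v 0))"
    by (rule computable_rec_nat) (intro computable_intros; simp)+
  moreover have "rec_nat 0 (\<lambda>k r. r + Suc k) a = triangle a" for a
    by (induction a) auto
  ultimately have "computable n (\<lambda>v. triangle (A v + B v) + A v)"
    using computable_compose1[of triangle] by (simp add: computable_intros assms)
  then show ?thesis
    by (simp add: npair_def prod_encode_def)
qed

lemma computable_nfst [computable_intros]:
  assumes "computable n A"
  shows "computable n (\<lambda>v. nfst (A v))"
proof -
  have "computable 1 (\<lambda>v. LEAST a. \<exists>b<Suc (v 0). npair a b = v 0)"
  proof (rule computable_Least)
    show "decidable (Suc 1) (\<lambda>v. \<exists>b<Suc (v (Suc 0)). npair (v 0) b = v (Suc 0))"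
      by (intro computable_intros; simp)
    show "\<exists>a b. b < Suc (v 0) \<and> npair a b = v 0" for v
      by (metis le_imp_less_Suc le_prod_encode_2 npair_def npair_nfst_nsnd)
  qed
  moreover have "(LEAST a. \<exists>b<Suc c. npair a b = c) = nfst c" for c
    by (rule Least_equality)
      (auto, metis le_imp_less_Suc le_prod_encode_2 npair_def npair_nfst_nsnd)
  ultimately show ?thesis
    using computable_compose1[of nfst, OF _ assms] by simp
qed

lemma computable_nsnd [computable_intros]:
  assumes "computable n A"
  shows "computable n (\<lambda>v. nsnd (A v))"
proof -
  have "computable 1 (\<lambda>v. LEAST b. \<exists>a<Suc (v 0). npair a b = v 0)"
  proof (rule computable_Least)
    show "decidable (Suc 1) (\<lambda>v. \<exists>a<Suc (v (Suc 0)). npair a (v 0) = v (Suc 0))"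
      by (intro computable_intros; simp)
    show "\<exists>b a. a < Suc (v 0) \<and> npair a b = v 0" for v
      by (metis le_imp_less_Suc le_prod_encode_1 npair_def npair_nfst_nsnd)
  qed
  moreover have "(LEAST b. \<exists>a<Suc c. npair a b = c) = nsnd c" for c
    by (rule Least_equality)
      (auto, metis le_imp_less_Suc le_prod_encode_1 npair_def npair_nfst_nsnd)
  ultimately show ?thesis
    using computable_compose1[of nsnd, OF _ assms] by simp
qed

definition ncons :: "nat \<Rightarrow> nat \<Rightarrow> nat" where
  "ncons x c = Suc (npair x c)"

definition nhd :: "nat \<Rightarrow> nat" where
  "nhd c = nfst (c - 1)"

definition ntl :: "nat \<Rightarrow> nat" where
  "ntl c = nsnd (c - 1)"

definition nnth :: "nat \<Rightarrow> nat \<Rightarrow> nat" where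
  "nnth c k = nhd ((ntl ^^ k) c)"

definition nlen :: "nat \<Rightarrow> nat" where
  "nlen c = (LEAST k. (ntl ^^ k) c = 0)"

lemma list_encode_Cons: "list_encode (x # xs) = ncons x (list_encode xs)"
  by (simp add: ncons_def npair_def)

lemma list_decode_eq_Nil_iff: "list_decode c = [] \<longleftrightarrow> c = 0"
  by (cases c) (auto split: prod.splits)

lemma hd_list_decode: "c \<noteq> 0 \<Longrightarrow> hd (list_decode c) = nhd c"
  by (cases c) (auto simp: nhd_def nfst_def split: prod.splits)

lemma tl_list_decode: "tl (list_decode c) = list_decode (ntl c)"
proof (cases c)
  case 0
  then show ?thesis by (simp add: ntl_def nsnd_zero)
next
  case (Suc n)
  then show ?thesis by (simp add: ntl_def nsnd_def split: prod.split)
qed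

lemma drop_list_decode: "drop k (list_decode c) = list_decode ((ntl ^^ k) c)"
  by (induction k arbitrary: c) (simp_all add: drop_Suc tl_list_decode funpow_swap1)

lemma ntl_funpow_length_list_decode: "(ntl ^^ length (list_decode c)) c = 0"
  using drop_list_decode[of "length (list_decode c)" c] list_decode_eq_Nil_iff
  by (metis drop_all order_refl)

lemma length_list_decode: "length (list_decode c) = nlen c"
  unfolding nlen_def
proof (rule sym, rule Least_equality)
  show "(ntl ^^ length (list_decode c)) c = 0"
    by (rule ntl_funpow_length_list_decode)
  show "length (list_decode c) \<le> k" if "(ntl ^^ k) c = 0" for k
    using drop_list_decode[of k c] that by simp
qed

lemma nth_list_decode:
  assumes "k < nlen c"
  shows "list_decode c ! k = nnth c k"
proof -
  have "list_decode ((ntl ^^ k) c) \<noteq> []"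
    using assms by (simp flip: drop_list_decode length_list_decode)
  then have "(ntl ^^ k) c \<noteq> 0"
    by (simp add: list_decode_eq_Nil_iff)
  have "list_decode c ! k = hd (drop k (list_decode c))"
    using assms by (simp add: hd_drop_conv_nth length_list_decode)
  also have "\<dots> = nhd ((ntl ^^ k) c)"
    using \<open>(ntl ^^ k) c \<noteq> 0\<close> by (simp add: drop_list_decode hd_list_decode)
  finally show ?thesis
    by (simp add: nnth_def)
qed

lemma computable_ncons [computable_intros]:
  "computable n A \<Longrightarrow> computable n B \<Longrightarrow> computable n (\<lambda>v. ncons (A v) (B v))"
  unfolding ncons_def by (intro computable_intros)

lemma computable_nhd [computable_intros]: "computable n A \<Longrightarrow> computable n (\<lambda>v. nhd (A v))"
  unfolding nhd_def by (intro computable_intros)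

lemma computable_ntl [computable_intros]: "computable n A \<Longrightarrow> computable n (\<lambda>v. ntl (A v))"
  unfolding ntl_def by (intro computable_intros)

lemma computable_ntl_funpow:
  assumes "computable n K" "computable n C"
  shows "computable n (\<lambda>v. (ntl ^^ K v) (C v))"
proof -
  have "computable n (\<lambda>v. rec_nat (C v) (\<lambda>k r. ntl r) (K v))"
    by (intro computable_rec_nat assms computable_intros; simp)
  moreover have "rec_nat c (\<lambda>k r. ntl r) k = (ntl ^^ k) c" for c k
    by (induction k) auto
  ultimately show ?thesis by simp
qed

lemma computable_nnth [computable_intros]:
  "computable n C \<Longrightarrow> computable n K \<Longrightarrow> computable n (\<lambda>v. nnth (C v) (K v))"
  unfolding nnth_def by (intro computable_nhd computable_ntl_funpow)

lemma computable_nlen [computable_intros]: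
  assumes "computable n A"
  shows "computable n (\<lambda>v. nlen (A v))"
proof -
  have "computable 1 (\<lambda>v. nlen (v 0))"
    unfolding nlen_def
  proof (rule computable_Least)
    show "decidable (Suc 1) (\<lambda>v. (ntl ^^ v 0) (v (Suc 0)) = 0)"
      by (intro decidable_eq computable_ntl_funpow computable_intros; simp)
    show "\<exists>k. (ntl ^^ k) (v 0) = 0" for v
      using ntl_funpow_length_list_decode by blast
  qed
  then show ?thesis
    using computable_compose1[of nlen, OF _ assms] by simp
qed

section \<open>Computation traces\<close>

primrec recf_code :: "recf \<Rightarrow> nat" where
  "recf_code Zf = npair 0 0"
| "recf_code Sf = npair 1 0"
| "recf_code (Idf i) = npair 2 i"
| "recf_code (Cnf f gs) = npair 3 (npair (recf_code f) (list_encode (map recf_code gs)))"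
| "recf_code (Prf f g) = npair 4 (npair (recf_code f) (recf_code g))"
| "recf_code (Mnf f) = npair 5 (recf_code f)"

text \<open>A trace line (c, xs, y, h) claims that the program with code c maps xs to y.
  The entry h records what the claim rests on: the code of the list of inner
  results for a composition, the value at the predecessor for a primitive recursion.\<close>

type_synonym trace_line = "nat \<times> nat list \<times> nat \<times> nat"

definition claimed :: "trace_line list \<Rightarrow> nat \<times> nat list \<times> nat \<Rightarrow> bool" where
  "claimed T = (\<lambda>(c, xs, y). \<exists>h. (c, xs, y, h) \<in> set T)"

definition justified_by :: "(nat \<times> nat list \<times> nat \<Rightarrow> bool) \<Rightarrow> trace_line \<Rightarrow> bool" where
  "justified_by H = (\<lambda>(c, xs, y, h).
     if nfst c = 0 then y = 0
     else if nfst c = 1 then xs \<noteq> [] \<and> y = Suc (hd xs)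
     else if nfst c = 2 then nsnd c < length xs \<and> y = xs ! nsnd c
     else if nfst c = 3 then
       length (list_decode h) = length (list_decode (nsnd (nsnd c))) \<and>
       (\<forall>k<length (list_decode (nsnd (nsnd c))).
          H (list_decode (nsnd (nsnd c)) ! k, xs, list_decode h ! k)) \<and>
       H (nfst (nsnd c), list_decode h, y)
     else if nfst c = 4 then
       xs \<noteq> [] \<and>
       (if hd xs = 0 then H (nfst (nsnd c), tl xs, y)
        else H (c, (hd xs - 1) # tl xs, h) \<and> H (nsnd (nsnd c), (hd xs - 1) # h # tl xs, y))
     else if nfst c = 5 then H (nsnd c, y # xs, 0) \<and> (\<forall>m<y. \<exists>k. H (nsnd c, m # xs, Suc k))
     else False)"

definition valid_trace :: "trace_line list \<Rightarrow> bool" where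
  "valid_trace T \<longleftrightarrow> (\<forall>i<length T. justified_by (claimed (take i T)) (T ! i))"

lemma claimed_append [simp]: "claimed (T @ T') J \<longleftrightarrow> claimed T J \<or> claimed T' J"
  by (auto simp: claimed_def split: prod.splits)

lemma claimed_snoc: "claimed (T @ [(c, xs, y, h)]) (c, xs, y)"
  by (auto simp: claimed_def)

lemma justified_by_mono: "justified_by H l \<Longrightarrow> (\<And>J. H J \<Longrightarrow> H' J) \<Longrightarrow> justified_by H' l"
  by (cases l) (simp add: justified_by_def split: if_splits; blast)

lemma justified_by_sound:
  assumes just: "justified_by H (recf_code f, xs, y, h)"
    and H: "\<And>f' xs' y'. H (recf_code f', xs', y') \<Longrightarrow> eval_recf f' xs' y'"
  shows "eval_recf f xs y"
proof (cases f)
  case Zf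
  then show ?thesis using just by (auto simp: justified_by_def intro: eval_recf.zero)
next
  case Sf
  then show ?thesis using just
    by (cases xs) (auto simp: justified_by_def intro: eval_recf.succ)
next
  case (Idf i)
  then show ?thesis using just by (auto simp: justified_by_def intro: eval_recf.proj)
next
  case (Cnf g gs)
  let ?ys = "list_decode h"
  have "length ?ys = length gs" "\<forall>k<length gs. H (recf_code (gs ! k), xs, ?ys ! k)"
    "H (recf_code g, ?ys, y)"
    using just Cnf by (auto simp: justified_by_def)
  then have "list_all2 (\<lambda>g y. eval_recf g xs y) gs ?ys" "eval_recf g ?ys y"
    using H by (auto simp: list_all2_conv_all_nth)
  then show ?thesis using Cnf by (auto intro: eval_recf.comp)
next
  case (Prf g1 g2)
  then obtain n rest where xs: "xs = n # rest"
    using just by (cases xs) (auto simp: justified_by_def)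
  show ?thesis
  proof (cases n)
    case 0
    then have "H (recf_code g1, rest, y)" using just Prf xs by (auto simp: justified_by_def)
    then show ?thesis using H xs 0 Prf by (auto intro: eval_recf.pr0)
  next
    case (Suc m)
    then have "H (recf_code f, m # rest, h)" "H (recf_code g2, m # h # rest, y)"
      using just Prf xs by (auto simp: justified_by_def)
    then have "eval_recf f (m # rest) h" "eval_recf g2 (m # h # rest) y"
      using H by blast+
    then show ?thesis using xs Suc Prf by (auto intro: eval_recf.prS)
  qed
next
  case (Mnf g)
  then have "H (recf_code g, y # xs, 0)" "\<forall>m<y. \<exists>k. H (recf_code g, m # xs, Suc k)"
    using just by (auto simp: justified_by_def)
  then show ?thesis using H Mnf by (blast intro: eval_recf.mn)
qed

lemma valid_trace_sound:
  assumes "valid_trace T" "claimed T (recf_code f, xs, y)"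
  shows "eval_recf f xs y"
proof -
  have "eval_recf f xs y" if "i < length T" "T ! i = (recf_code f, xs, y, h)" for i f xs y h
    using that
  proof (induction i arbitrary: f xs y h rule: less_induct)
    case (less i)
    have "justified_by (claimed (take i T)) (recf_code f, xs, y, h)"
      using assms(1) less.prems unfolding valid_trace_def by metis
    moreover have "eval_recf f' xs' y'" if "claimed (take i T) (recf_code f', xs', y')" for f' xs' y'
      using that less.IH less.prems(1)
      by (auto simp: claimed_def in_set_conv_nth)
    ultimately show ?case
      by (rule justified_by_sound)
  qed
  then show ?thesis
    using assms(2) by (auto simp: claimed_def in_set_conv_nth)
qed

lemma valid_trace_Nil: "valid_trace []"
  by (simp add: valid_trace_def)

lemma valid_trace_append:
  assumes "valid_trace T1" "valid_trace T2"
  shows "valid_trace (T1 @ T2)"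
  unfolding valid_trace_def
proof (intro allI impI)
  fix i assume i: "i < length (T1 @ T2)"
  show "justified_by (claimed (take i (T1 @ T2))) ((T1 @ T2) ! i)"
  proof (cases "i < length T1")
    case True
    then show ?thesis using assms(1) by (simp add: valid_trace_def nth_append)
  next
    case False
    then have "justified_by (claimed (take (i - length T1) T2)) (T2 ! (i - length T1))"
      using assms(2) i unfolding valid_trace_def by auto
    then show ?thesis
      using False by (simp add: nth_append) (erule justified_by_mono; simp)
  qed
qed

lemma valid_trace_snoc:
  "valid_trace T \<Longrightarrow> justified_by (claimed T) l \<Longrightarrow> valid_trace (T @ [l])"
  unfolding valid_trace_def by (auto simp: nth_append less_Suc_eq)

lemma valid_trace_collect:
  fixes n :: nat
  assumes "\<forall>k<n. \<exists>T. valid_trace T \<and> claimed T (J k)"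
  shows "\<exists>T. valid_trace T \<and> (\<forall>k<n. claimed T (J k))"
  using assms
proof (induction n)
  case 0
  then show ?case using valid_trace_Nil by auto
next
  case (Suc n)
  then obtain T T' where "valid_trace T" "\<forall>k<n. claimed T (J k)"
    "valid_trace T'" "claimed T' (J n)"
    by (metis less_Suc_eq)
  then show ?case
    by (intro exI[of _ "T @ T'"]) (auto intro: valid_trace_append simp: less_Suc_eq)
qed

lemma valid_trace_extend:
  assumes "valid_trace T1" "valid_trace T2" "justified_by (claimed (T1 @ T2)) (c, xs, y, h)"
  shows "\<exists>T. valid_trace T \<and> claimed T (c, xs, y)"
  using assms valid_trace_append valid_trace_snoc claimed_snoc by blast

lemma eval_recf_has_trace:
  "eval_recf f xs y \<Longrightarrow> \<exists>T. valid_trace T \<and> claimed T (recf_code f, xs, y)"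
proof (induction rule: eval_recf.induct)
  case (zero xs)
  show ?case
    by (rule valid_trace_extend[OF valid_trace_Nil valid_trace_Nil, where h=0])
      (simp add: justified_by_def)
next
  case (succ x xs)
  show ?case
    by (rule valid_trace_extend[OF valid_trace_Nil valid_trace_Nil, where h=0])
      (simp add: justified_by_def)
next
  case (proj i xs)
  show ?case
    by (rule valid_trace_extend[OF valid_trace_Nil valid_trace_Nil, where h=0])
      (simp add: justified_by_def proj)
next
  case (comp xs gs ys f y)
  have "\<forall>k<length gs. \<exists>T. valid_trace T \<and> claimed T (recf_code (gs ! k), xs, ys ! k)"
    using comp(1) by (auto simp: list_all2_conv_all_nth)
  then obtain T0 where T0: "valid_trace T0"
    "\<forall>k<length gs. claimed T0 (recf_code (gs ! k), xs, ys ! k)"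
    using valid_trace_collect[of "length gs" "\<lambda>k. (recf_code (gs ! k), xs, ys ! k)"] by blast
  obtain T1 where T1: "valid_trace T1" "claimed T1 (recf_code f, ys, y)"
    using comp by blast
  have "justified_by (claimed (T0 @ T1)) (recf_code (Cnf f gs), xs, y, list_encode ys)"
    using T0(2) T1(2) list_all2_lengthD[OF comp(1)] by (simp add: justified_by_def)
  then show ?case
    using valid_trace_extend T0(1) T1(1) by blast
next
  case (pr0 f xs y g)
  then obtain T where "valid_trace T" "claimed T (recf_code f, xs, y)"
    by blast
  then show ?case
    by (intro valid_trace_extend[OF _ valid_trace_Nil, where h=0]) (simp_all add: justified_by_def)
next
  case (prS f g n xs r y)
  then obtain T1 T2 where T1: "valid_trace T1" "claimed T1 (recf_code (Prf f g), n # xs, r)"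
    and T2: "valid_trace T2" "claimed T2 (recf_code g, n # r # xs, y)"
    by blast
  then have "justified_by (claimed (T1 @ T2)) (recf_code (Prf f g), Suc n # xs, y, r)"
    by (simp add: justified_by_def)
  then show ?case
    using valid_trace_extend T1(1) T2(1) by blast
next
  case (mn f n xs)
  obtain T0 where T0: "valid_trace T0" "claimed T0 (recf_code f, n # xs, 0)"
    using mn by blast
  obtain k where "\<forall>m<n. \<exists>T. valid_trace T \<and> claimed T (recf_code f, m # xs, Suc (k m))"
    using mn(3) by metis
  then obtain T1 where T1: "valid_trace T1" "\<forall>m<n. claimed T1 (recf_code f, m # xs, Suc (k m))"
    using valid_trace_collect[of n "\<lambda>m. (recf_code f, m # xs, Suc (k m))"] by blast
  have "justified_by (claimed (T0 @ T1)) (recf_code (Mnf f), xs, n, 0)"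
    using T0(2) T1(2) by (auto simp: justified_by_def)
  then show ?case
    using valid_trace_extend T0(1) T1(1) by blast
qed

inductive_cases eval_recf_ZfE: "eval_recf Zf xs y"
inductive_cases eval_recf_SfE: "eval_recf Sf xs y"
inductive_cases eval_recf_IdfE: "eval_recf (Idf i) xs y"
inductive_cases eval_recf_CnfE: "eval_recf (Cnf f gs) xs y"
inductive_cases eval_recf_PrfE: "eval_recf (Prf f g) xs y"
inductive_cases eval_recf_MnfE: "eval_recf (Mnf f) xs y"

lemma eval_recf_deterministic: "eval_recf f xs y \<Longrightarrow> eval_recf f xs y' \<Longrightarrow> y = y'"
proof (induction arbitrary: y' rule: eval_recf.induct)
  case (zero xs)
  then show ?case by (blast elim: eval_recf_ZfE)
next
  case (succ x xs)
  then show ?case by (blast elim: eval_recf_SfE)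
next
  case (proj i xs)
  then show ?case by (blast elim: eval_recf_IdfE)
next
  case (comp xs gs ys f y)
  from comp.prems obtain ys' where ys': "list_all2 (\<lambda>g y. eval_recf g xs y) gs ys'"
    "eval_recf f ys' y'"
    by (blast elim: eval_recf_CnfE)
  have "ys = ys'"
    using comp.IH(1) ys'(1) by (induction gs arbitrary: ys ys') (auto simp: list_all2_Cons1)
  then show ?case using comp.IH(2) ys'(2) by auto
next
  case (pr0 f xs y g)
  from pr0.prems show ?case by (rule eval_recf_PrfE) (use pr0.IH in auto)
next
  case (prS f g n xs r y)
  from prS.prems obtain r' where "eval_recf (Prf f g) (n # xs) r'" "eval_recf g (n # r' # xs) y'"
    by (rule eval_recf_PrfE) auto
  then show ?case using prS.IH by auto
next
  case (mn f n xs)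
  from mn.prems have y': "eval_recf f (y' # xs) 0" "\<forall>m<y'. \<exists>k. eval_recf f (m # xs) (Suc k)"
    by (blast elim: eval_recf_MnfE)+
  show ?case
  proof (rule linorder_cases[of n y'])
    assume "n < y'"
    then show ?thesis using y'(2) mn.IH(1) by fastforce
  next
    assume "y' < n"
    then show ?thesis using y'(1) mn.IH(2) by fastforce
  qed
qed

section \<open>Traces coded by numbers\<close>

definition line_prog :: "nat \<Rightarrow> nat" where
  "line_prog L = nfst (nfst L)"

definition line_args :: "nat \<Rightarrow> nat" where
  "line_args L = nfst (nsnd (nfst L))"

definition line_res :: "nat \<Rightarrow> nat" where
  "line_res L = nsnd (nsnd (nfst L))"

definition line_aux :: "nat \<Rightarrow> nat" where
  "line_aux L = nsnd L"

definition decode_line :: "nat \<Rightarrow> trace_line" where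
  "decode_line L = (line_prog L, list_decode (line_args L), line_res L, line_aux L)"

definition decode_trace :: "nat \<Rightarrow> trace_line list" where
  "decode_trace t = map decode_line (list_decode t)"

definition certifies :: "nat \<Rightarrow> nat \<Rightarrow> bool" where
  "certifies t e \<longleftrightarrow> valid_trace (decode_trace t) \<and> claimed (decode_trace t) (e, [e], 0)"

lemma decode_trace_surj: "\<exists>t. decode_trace t = T"
proof
  let ?code = "\<lambda>(c, xs, y, h). npair (npair c (npair (list_encode xs) y)) h"
  show "decode_trace (list_encode (map ?code T)) = T"
    by (induction T) (auto simp: decode_trace_def decode_line_def line_prog_def line_args_def
        line_res_def line_aux_def)
qed

lemma certified_iff_eval_recf: "(\<exists>t. certifies t (recf_code f)) \<longleftrightarrow> eval_recf f [recf_code f] 0"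
  unfolding certifies_def
  using valid_trace_sound eval_recf_has_trace decode_trace_surj by metis

lemma not_recursive_certified: "\<not> recursive_set {e. \<exists>t. certifies t e}"
proof
  assume "recursive_set {e. \<exists>t. certifies t e}"
  then obtain f
    where f: "eval_recf f [recf_code f] (if \<exists>t. certifies t (recf_code f) then 1 else 0)"
    unfolding recursive_set_def by auto
  show False
  proof (cases "\<exists>t. certifies t (recf_code f)")
    case True
    then show False
      using f certified_iff_eval_recf eval_recf_deterministic by fastforce
  next
    case False
    then show False
      using f certified_iff_eval_recf by auto
  qed
qed

definition claimed_code :: "nat \<Rightarrow> nat \<Rightarrow> nat \<Rightarrow> nat \<Rightarrow> nat \<Rightarrow> bool" where
  "claimed_code t i c x y \<longleftrightarrow>
     (\<exists>j<i. line_prog (nnth t j) = c \<and> line_args (nnth t j) = x \<and> line_res (nnth t j) = y)"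

text \<open>The unbounded search for k in the minimisation rule becomes bounded once the
  result is read off the trace.\<close>

definition claimed_pos_code :: "nat \<Rightarrow> nat \<Rightarrow> nat \<Rightarrow> nat \<Rightarrow> bool" where
  "claimed_pos_code t i c x \<longleftrightarrow>
     (\<exists>j<i. line_prog (nnth t j) = c \<and> line_args (nnth t j) = x \<and> line_res (nnth t j) \<noteq> 0)"

definition justified_code :: "nat \<Rightarrow> nat \<Rightarrow> nat \<Rightarrow> nat \<Rightarrow> nat \<Rightarrow> nat \<Rightarrow> bool" where
  "justified_code t i c x y h \<longleftrightarrow>
     (if nfst c = 0 then y = 0
      else if nfst c = 1 then x \<noteq> 0 \<and> y = Suc (nhd x)
      else if nfst c = 2 then nsnd c < nlen x \<and> y = nnth x (nsnd c)
      else if nfst c = 3 then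
        nlen h = nlen (nsnd (nsnd c)) \<and>
        (\<forall>k<nlen (nsnd (nsnd c)). claimed_code t i (nnth (nsnd (nsnd c)) k) x (nnth h k)) \<and>
        claimed_code t i (nfst (nsnd c)) h y
      else if nfst c = 4 then
        x \<noteq> 0 \<and>
        (if nhd x = 0 then claimed_code t i (nfst (nsnd c)) (ntl x) y
         else claimed_code t i c (ncons (nhd x - 1) (ntl x)) h \<and>
           claimed_code t i (nsnd (nsnd c)) (ncons (nhd x - 1) (ncons h (ntl x))) y)
      else if nfst c = 5 then
        claimed_code t i (nsnd c) (ncons y x) 0 \<and>
        (\<forall>m<y. claimed_pos_code t i (nsnd c) (ncons m x))
      else False)"

definition certifies_code :: "nat \<Rightarrow> nat \<Rightarrow> bool" where
  "certifies_code t e \<longleftrightarrow>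
     (\<forall>i<nlen t. justified_code t i (line_prog (nnth t i)) (line_args (nnth t i))
                   (line_res (nnth t i)) (line_aux (nnth t i))) \<and>
     claimed_code t (nlen t) e (ncons e 0) 0"

lemma length_decode_trace: "length (decode_trace t) = nlen t"
  by (simp add: decode_trace_def length_list_decode)

lemma nth_decode_trace: "i < nlen t \<Longrightarrow> decode_trace t ! i = decode_line (nnth t i)"
  by (simp add: decode_trace_def length_list_decode nth_list_decode)

lemma claimed_decode_trace_iff:
  assumes "i \<le> nlen t"
  shows "claimed (take i (decode_trace t)) (c, xs, y) \<longleftrightarrow> claimed_code t i c (list_encode xs) y"
proof -
  have "claimed (take i (decode_trace t)) (c, xs, y) \<longleftrightarrow>
      (\<exists>j<i. \<exists>h. decode_trace t ! j = (c, xs, y, h))"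
    using assms by (auto simp: claimed_def in_set_conv_nth length_decode_trace) (metis nth_take)
  also have "\<dots> \<longleftrightarrow> claimed_code t i c (list_encode xs) y"
    using assms by (auto simp: nth_decode_trace decode_line_def claimed_code_def) blast
  finally show ?thesis .
qed

lemma ex_claimed_code_Suc_iff: "(\<exists>k. claimed_code t i c x (Suc k)) \<longleftrightarrow> claimed_pos_code t i c x"
  unfolding claimed_code_def claimed_pos_code_def by (metis nat.distinct(1) not0_implies_Suc)

lemma justified_by_decode_trace_iff:
  assumes "i \<le> nlen t"
  shows "justified_by (claimed (take i (decode_trace t))) (c, list_decode x, y, h) \<longleftrightarrow>
    justified_code t i c x y h"
  unfolding justified_by_def justified_code_def
  by (simp add: claimed_decode_trace_iff[OF assms] ex_claimed_code_Suc_iff list_decode_eq_Nil_iff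
      hd_list_decode tl_list_decode length_list_decode nth_list_decode list_encode_Cons
      del: list_encode.simps(2) cong: conj_cong)

lemma certifies_iff_certifies_code: "certifies t e \<longleftrightarrow> certifies_code t e"
proof -
  have "valid_trace (decode_trace t) \<longleftrightarrow>
      (\<forall>i<nlen t. justified_code t i (line_prog (nnth t i)) (line_args (nnth t i))
                    (line_res (nnth t i)) (line_aux (nnth t i)))"
    by (simp add: valid_trace_def length_decode_trace nth_decode_trace decode_line_def
        justified_by_decode_trace_iff)
  moreover have "claimed (decode_trace t) (e, [e], 0) \<longleftrightarrow> claimed_code t (nlen t) e (ncons e 0) 0"
    using claimed_decode_trace_iff[of "nlen t" t e "[e]" 0]
    by (simp add: length_decode_trace list_encode_Cons del: list_encode.simps(2))
  ultimately show ?thesis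
    unfolding certifies_def certifies_code_def by simp
qed

lemma computable_line_fields [computable_intros]:
  assumes "computable n L"
  shows "computable n (\<lambda>v. line_prog (L v))" "computable n (\<lambda>v. line_args (L v))"
    "computable n (\<lambda>v. line_res (L v))" "computable n (\<lambda>v. line_aux (L v))"
  unfolding line_prog_def line_args_def line_res_def line_aux_def
  by (intro computable_intros assms)+

lemma decidable_claimed_code [computable_intros]:
  assumes "computable n T" "computable n I" "computable n C" "computable n X" "computable n Y"
  shows "decidable n (\<lambda>v. claimed_code (T v) (I v) (C v) (X v) (Y v))"
  unfolding claimed_code_def
  by (intro computable_intros assms assms[THEN computable_shift]; simp)

lemma decidable_claimed_pos_code [computable_intros]:
  assumes "computable n T" "computable n I" "computable n C" "computable n X"
  shows "decidable n (\<lambda>v. claimed_pos_code (T v) (I v) (C v) (X v))"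
  unfolding claimed_pos_code_def
  by (intro computable_intros assms assms[THEN computable_shift]; simp)

lemma decidable_justified_code [computable_intros]:
  assumes "computable n T" "computable n I" "computable n C" "computable n X"
    "computable n Y" "computable n H"
  shows "decidable n (\<lambda>v. justified_code (T v) (I v) (C v) (X v) (Y v) (H v))"
  unfolding justified_code_def
  by (intro computable_intros assms assms[THEN computable_shift]; simp)

lemma decidable_certifies_code [computable_intros]:
  assumes "computable n T" "computable n E"
  shows "decidable n (\<lambda>v. certifies_code (T v) (E v))"
  unfolding certifies_code_def
  by (intro computable_intros assms assms[THEN computable_shift]; simp)

section \<open>The set J\<close>

text \<open>Since int_decode (2 * v) = v and int_decode (2 * v + 1) = - v - 1, the entry of
  decode_elem c at an index k \<ge> 0 is the difference of the following two sums.\<close>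

definition coeff_pos :: "nat \<Rightarrow> nat \<Rightarrow> nat" where
  "coeff_pos c k = (\<Sum>j<nlen c. if nfst (nnth c j) = 2 * k \<and> even (nsnd (nnth c j))
                                then nsnd (nnth c j) div 2 else 0)"

definition coeff_neg :: "nat \<Rightarrow> nat \<Rightarrow> nat" where
  "coeff_neg c k = (\<Sum>j<nlen c. if nfst (nnth c j) = 2 * k \<and> odd (nsnd (nnth c j))
                                then Suc (nsnd (nnth c j) div 2) else 0)"

lemma computable_coeff_pos [computable_intros]:
  "computable n C \<Longrightarrow> computable n K \<Longrightarrow> computable n (\<lambda>v. coeff_pos (C v) (K v))"
  unfolding coeff_pos_def by (intro computable_intros computable_shift; simp)

lemma computable_coeff_neg [computable_intros]:
  "computable n C \<Longrightarrow> computable n K \<Longrightarrow> computable n (\<lambda>v. coeff_neg (C v) (K v))"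
  unfolding coeff_neg_def by (intro computable_intros computable_shift; simp)

lemma int_decode_eq_int_iff: "int_decode m = int k \<longleftrightarrow> m = 2 * k"
proof -
  have "int_encode (int k) = 2 * k"
    by (simp add: int_encode_def sum_encode_def)
  then show ?thesis
    by (metis int_decode_inverse int_encode_inverse)
qed

lemma int_decode_if: "int_decode m = (if even m then int (m div 2) else - int (m div 2) - 1)"
  by (simp add: int_decode_def sum_decode_def)

lemma lookup_sum_list:
  "Poly_Mapping.lookup (sum_list ps) x = (\<Sum>p\<leftarrow>ps. Poly_Mapping.lookup p x)"
  by (induction ps) (auto simp: lookup_add)

lemma sum_list_map_list_decode: "(\<Sum>x\<leftarrow>list_decode c. f x) = (\<Sum>j<nlen c. f (nnth c j))"
  unfolding sum_list_sum_nth atLeast0LessThan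
  by (rule sum.cong) (simp_all add: length_list_decode nth_list_decode)

lemma lookup_decode_elem:
  "Poly_Mapping.lookup (decode_elem c) (int k) = int (coeff_pos c k) - int (coeff_neg c k)"
proof -
  define pos where "pos = (\<lambda>a. if nfst a = 2 * k \<and> even (nsnd a) then nsnd a div 2 else 0)"
  define neg where "neg = (\<lambda>a. if nfst a = 2 * k \<and> odd (nsnd a) then Suc (nsnd a div 2) else 0)"
  have entry: "Poly_Mapping.lookup (case prod_decode a of (i, x) \<Rightarrow>
      Poly_Mapping.single (int_decode i) (int_decode x)) (int k) = int (pos a) - int (neg a)" for a
  proof -
    have "prod_decode a = (nfst a, nsnd a)"
      by (simp add: nfst_def nsnd_def)
    then show ?thesis
      by (simp add: lookup_single when_def int_decode_eq_int_iff)
        (auto simp: int_decode_if pos_def neg_def)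
  qed
  have "Poly_Mapping.lookup (decode_elem c) (int k) =
      (\<Sum>x\<leftarrow>list_decode c. int (pos x) - int (neg x))"
    by (simp add: decode_elem_def lookup_sum_list entry comp_def)
  also have "\<dots> = int (\<Sum>x\<leftarrow>list_decode c. pos x) - int (\<Sum>x\<leftarrow>list_decode c. neg x)"
    by (simp add: sum_list_subtractf comp_def flip: sum_list_of_nat)
  also have "\<dots> = int (coeff_pos c k) - int (coeff_neg c k)"
    by (simp only: sum_list_map_list_decode coeff_pos_def coeff_neg_def pos_def neg_def)
  finally show ?thesis .
qed

text \<open>The offset 5 keeps the coordinate e + 5, the only one moved by delta e, clear of
  the coordinates 1 and 2 that the definition reads.\<close>

definition A_set :: "(int \<Rightarrow>\<^sub>0 int) set" where
  "A_set = {w. Poly_Mapping.lookup w 2 = 1 \<and>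
     (certifies (nsnd (nat (Poly_Mapping.lookup w 1))) (nfst (nat (Poly_Mapping.lookup w 1)))
      \<longrightarrow> Poly_Mapping.lookup w (int (nfst (nat (Poly_Mapping.lookup w 1))) + 5) = 0)}"

definition J_set :: "(int \<Rightarrow>\<^sub>0 int) set" where
  "J_set = A_set \<union> uminus ` A_set"

definition delta :: "nat \<Rightarrow> (int \<Rightarrow>\<^sub>0 int)" where
  "delta e = Poly_Mapping.single (int e + 5) 1"

lemma uminus_image_iff: "(x :: 'a :: group_add) \<in> uminus ` S \<longleftrightarrow> - x \<in> S"
  by (metis image_iff minus_minus)

lemma zero_notin_J_set: "0 \<notin> J_set"
  by (simp add: J_set_def A_set_def uminus_image_iff)

lemma uminus_image_J_set: "uminus ` J_set = J_set"
  by (simp add: J_set_def image_Un image_image Un_commute)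

definition A_code :: "(nat \<Rightarrow> nat) \<Rightarrow> (nat \<Rightarrow> nat) \<Rightarrow> bool" where
  "A_code P N \<longleftrightarrow> P 2 = N 2 + 1 \<and>
     (certifies_code (nsnd (P 1 - N 1)) (nfst (P 1 - N 1)) \<longrightarrow>
        P (nfst (P 1 - N 1) + 5) = N (nfst (P 1 - N 1) + 5))"

lemma mem_A_set_iff_A_code:
  assumes "\<And>k. Poly_Mapping.lookup w (int k) = int (P k) - int (N k)"
  shows "w \<in> A_set \<longleftrightarrow> A_code P N"
proof -
  have at1: "nat (Poly_Mapping.lookup w 1) = P 1 - N 1"
    and at2: "Poly_Mapping.lookup w 2 = int (P 2) - int (N 2)"
    and at_shift5: "Poly_Mapping.lookup w (int p + 5) = int (P (p + 5)) - int (N (p + 5))" for p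
    using assms[of 1] assms[of 2] assms[of "p + 5"] by simp_all
  show ?thesis
    unfolding A_set_def A_code_def mem_Collect_eq at1 at2 at_shift5 certifies_iff_certifies_code
    by linarith
qed

lemma recursive_J_set: "recursive_set {n. decode_elem n \<in> J_set}"
proof -
  have "decode_elem n \<in> J_set \<longleftrightarrow>
      A_code (coeff_pos n) (coeff_neg n) \<or> A_code (coeff_neg n) (coeff_pos n)" for n
    unfolding J_set_def Un_iff uminus_image_iff
    by (simp add: mem_A_set_iff_A_code lookup_decode_elem)
  moreover have "decidable 1 (\<lambda>v. A_code (coeff_pos (v 0)) (coeff_neg (v 0)) \<or>
      A_code (coeff_neg (v 0)) (coeff_pos (v 0)))"
    unfolding A_code_def by (intro computable_intros; simp)
  ultimately show ?thesis
    using recursive_set_if_decidable by simp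
qed

lemma add_delta_mem_A_set_iff:
  assumes "\<not> (\<exists>t. certifies t e)"
  shows "w + delta e \<in> A_set \<longleftrightarrow> w \<in> A_set"
proof -
  have lookup: "Poly_Mapping.lookup (w + delta e) x =
      Poly_Mapping.lookup w x + (if x = int e + 5 then 1 else 0)" for x
    by (simp add: lookup_add delta_def lookup_single when_def)
  define p where "p = nat (Poly_Mapping.lookup w 1)"
  have "certifies (nsnd p) (nfst p) \<Longrightarrow> nfst p \<noteq> e"
    using assms by blast
  then show ?thesis
    unfolding A_set_def mem_Collect_eq lookup by (auto simp flip: p_def)
qed

lemma add_delta_mem_J_set_iff:
  assumes "\<not> (\<exists>t. certifies t e)"
  shows "w + delta e \<in> J_set \<longleftrightarrow> w \<in> J_set"
  using add_delta_mem_A_set_iff[OF assms, of w]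
    add_delta_mem_A_set_iff[OF assms, of "- w - delta e"]
  unfolding J_set_def Un_iff uminus_image_iff by (simp add: algebra_simps)

lemma odd_card_translate_iff_certified:
  "(\<exists>g. odd (card ((\<lambda>x. x - g) ` {0, delta e} \<inter> J_set))) \<longleftrightarrow> (\<exists>t. certifies t e)"
proof
  assume "\<exists>g. odd (card ((\<lambda>x. x - g) ` {0, delta e} \<inter> J_set))"
  then obtain g where g: "odd (card ((\<lambda>x. x - g) ` {0, delta e} \<inter> J_set))"
    by blast
  show "\<exists>t. certifies t e"
  proof (rule ccontr)
    assume "\<not> (\<exists>t. certifies t e)"
    then have "- g + delta e \<in> J_set \<longleftrightarrow> - g \<in> J_set"
      by (rule add_delta_mem_J_set_iff)
    moreover have "- g \<noteq> - g + delta e"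
      by (auto simp: delta_def)
    ultimately have "card ((\<lambda>x. x - g) ` {0, delta e} \<inter> J_set) \<in> {0, 2}"
      by (cases "- g \<in> J_set") (auto simp: Int_insert_left)
    with g show False
      by auto
  qed
next
  assume "\<exists>t. certifies t e"
  then obtain t where t: "certifies t e"
    by blast
  define w :: "int \<Rightarrow>\<^sub>0 int" where
    "w = Poly_Mapping.single 2 1 + Poly_Mapping.single 1 (int (npair e t))"
  have lookup_w: "Poly_Mapping.lookup w x =
      (if x = 2 then 1 else 0) + (if x = 1 then int (npair e t) else 0)" for x
    by (auto simp: w_def lookup_add lookup_single when_def)
  have "w \<in> A_set" "w + delta e \<notin> A_set" "w + delta e \<notin> uminus ` A_set"
    using t by (simp_all add: A_set_def uminus_image_iff lookup_w lookup_add lookup_minus delta_def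
        lookup_single when_def)
  then have "(\<lambda>x. x - (- w)) ` {0, delta e} \<inter> J_set = {w}"
    by (auto simp: J_set_def algebra_simps)
  then show "\<exists>g. odd (card ((\<lambda>x. x - g) ` {0, delta e} \<inter> J_set))"
    by (intro exI[of _ "- w"]) simp
qed

text \<open>The entry of delta e is coded by npair (int_encode (e + 5)) (int_encode 1).\<close>

definition delta_pair_code :: "nat \<Rightarrow> nat" where
  "delta_pair_code e = ncons 0 (ncons (ncons (npair (2 * e + 10) 2) 0) 0)"

lemma decode_fset_delta_pair_code: "decode_fset (delta_pair_code e) = {0, delta e}"
proof -
  have "delta_pair_code e = list_encode [0, list_encode [npair (2 * e + 10) 2]]"
    by (simp add: delta_pair_code_def list_encode_Cons del: list_encode.simps(2))
  moreover have "int_decode (2 * e + 10) = int e + 5" "int_decode 2 = 1"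
    by (simp_all add: int_decode_if)
  ultimately show ?thesis
    by (simp add: decode_fset_def decode_elem_def delta_def npair_def)
qed

lemma computable_delta_pair_code: "computable 1 (\<lambda>v. delta_pair_code (v 0))"
  unfolding delta_pair_code_def by (intro computable_intros; simp)

theorem mainTheorem3:
  shows "\<exists>J :: (int \<Rightarrow>\<^sub>0 int) set.
     recursive_set {n. decode_elem n \<in> J} \<and> 0 \<notin> J \<and> uminus ` J = J \<and>
     \<not> recursive_set {n. \<exists>g :: int \<Rightarrow>\<^sub>0 int.
          odd (card ((\<lambda>x. x - g) ` decode_fset n \<inter> J))}"
proof (intro exI conjI)
  show "recursive_set {n. decode_elem n \<in> J_set}"
    by (rule recursive_J_set)
  show "0 \<notin> J_set"
    by (rule zero_notin_J_set)
  show "uminus ` J_set = J_set"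
    by (rule uminus_image_J_set)
  show "\<not> recursive_set {n. \<exists>g. odd (card ((\<lambda>x. x - g) ` decode_fset n \<inter> J_set))}"
  proof
    assume "recursive_set {n. \<exists>g. odd (card ((\<lambda>x. x - g) ` decode_fset n \<inter> J_set))}"
    then have "recursive_set {e. delta_pair_code e \<in>
        {n. \<exists>g. odd (card ((\<lambda>x. x - g) ` decode_fset n \<inter> J_set))}}"
      by (rule recursive_set_preimage[OF _ computable_delta_pair_code])
    then have "recursive_set {e. \<exists>t. certifies t e}"
      by (simp only: mem_Collect_eq decode_fset_delta_pair_code odd_card_translate_iff_certified)
    then show False
      using not_recursive_certified by simp
  qed
qed

end
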